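(* Let $\tau>0$, $u_n\in\mathcal V_{[0,1]}$, $X:=\{u\in\mathcal V_{[0,1]}:\mathcal M(u)=\mathcal M(u_n)\}$, and for $\lambda\le1$ let $f_\lambda(u):=(1-\lambda)\|u\|^2_{\mathcal V}-2\langle u,e^{-\tau\Delta}u_n\rangle_{\mathcal V}$. Then $f_\lambda\to f_1$ uniformly on $X$ as $\lambda\uparrow1$. Furthermore, if for each $\lambda$ in a set accumulating at $1$ from below, $u^\lambda\in X$ minimises $f_\lambda$ over $X$, and $u^\lambda\to u$ as $\lambda\uparrow1$, then $u\in X$ and $u$ maximises $\langle v,e^{-\tau\Delta}u_n\rangle_{\mathcal V}$ over $v\in X$.
   Context: $G=(V,E)$ is a finite, simple, connected, undirected graph with weights $\omega_{ij}=\omega_{ji}>0$ for $ij\in E$, $\omega_{ij}=0$ otherwise; $d_i=\sum_j\omega_{ij}$, $r\in[0,1]$ fixed. $\mathcal V$ = functions $V\to\mathbb R$ with $\langle u,v\rangle_{\mathcal V}=\sum_i u_iv_id_i^r$ and norm $\|\cdot\|_{\mathcal V}$; $\mathcal V_{[0,1]}$ = functions $V\to[0,1]$. $(\Delta u)_i=d_i^{-r}\sum_j\omega_{ij}(u_i-u_j)$, $e^{-\tau\Delta}$ its matrix exponential. $\mathbf 1$ all-ones; $\mathcal M(u)=\langle u,\mathbf 1\rangle_{\mathcal V}$. *)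

theory Defs
  imports "HOL-Analysis.Analysis"
begin

text \<open>Weighted graph on the finite vertex type 'a, given by a weight function w
  (w i j > 0 iff ij is an edge, w i j = 0 otherwise).\<close>

definition weighted_graph :: "('a::finite \<Rightarrow> 'a \<Rightarrow> real) \<Rightarrow> bool" where
  "weighted_graph w \<longleftrightarrow> (\<forall>i j. w i j = w j i) \<and> (\<forall>i j. 0 \<le> w i j) \<and> (\<forall>i. w i i = 0)"

definition graph_connected :: "('a::finite \<Rightarrow> 'a \<Rightarrow> real) \<Rightarrow> bool" where
  "graph_connected w \<longleftrightarrow> (\<forall>i j. (i, j) \<in> {(x, y). 0 < w x y}\<^sup>*)"

definition deg :: "('a::finite \<Rightarrow> 'a \<Rightarrow> real) \<Rightarrow> 'a \<Rightarrow> real" where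
  "deg w i = (\<Sum>j\<in>UNIV. w i j)"

definition innerV :: "('a::finite \<Rightarrow> 'a \<Rightarrow> real) \<Rightarrow> real \<Rightarrow> ('a \<Rightarrow> real) \<Rightarrow> ('a \<Rightarrow> real) \<Rightarrow> real" where
  "innerV w r u v = (\<Sum>i\<in>UNIV. u i * v i * (deg w i) powr r)"

definition normV :: "('a::finite \<Rightarrow> 'a \<Rightarrow> real) \<Rightarrow> real \<Rightarrow> ('a \<Rightarrow> real) \<Rightarrow> real" where
  "normV w r u = sqrt (innerV w r u u)"

definition massV :: "('a::finite \<Rightarrow> 'a \<Rightarrow> real) \<Rightarrow> real \<Rightarrow> ('a \<Rightarrow> real) \<Rightarrow> real" where
  "massV w r u = innerV w r u (\<lambda>_. 1)"

definition V01 :: "('a \<Rightarrow> real) set" where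
  "V01 = {u. \<forall>i. 0 \<le> u i \<and> u i \<le> 1}"

definition graph_lap :: "('a::finite \<Rightarrow> 'a \<Rightarrow> real) \<Rightarrow> real \<Rightarrow> ('a \<Rightarrow> real) \<Rightarrow> 'a \<Rightarrow> real" where
  "graph_lap w r u i = (deg w i) powr (- r) * (\<Sum>j\<in>UNIV. w i j * (u i - u j))"

text \<open>Matrix exponential e^{-t Delta} applied to u, via its (absolutely convergent) power series.\<close>
definition heat :: "('a::finite \<Rightarrow> 'a \<Rightarrow> real) \<Rightarrow> real \<Rightarrow> real \<Rightarrow> ('a \<Rightarrow> real) \<Rightarrow> 'a \<Rightarrow> real" where
  "heat w r t u i = (\<Sum>k. (- t) ^ k / fact k * ((graph_lap w r ^^ k) u i))"

end

theory Submission
  imports Defs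
begin

text \<open>Only the quadratic term of \<open>f \<lambda>\<close> depends on \<open>\<lambda>\<close>, and
  \<open>\<parallel>u\<parallel>\<^sup>2 \<le> \<Sum>\<^sub>i d\<^sub>i\<^sup>r\<close> on \<open>V01\<close>, so \<open>f \<lambda> - f 1 = (1 - \<lambda>) \<parallel>u\<parallel>\<^sup>2\<close> vanishes
  uniformly. The set \<open>X\<close> is closed, so it contains the limit \<open>u\<close>; and the
  minimality \<open>f \<lambda> (u\<^sup>\<lambda>) \<le> f \<lambda> v\<close> rearranges to
  \<open>2\<langle>v, h\<rangle> - 2\<langle>u\<^sup>\<lambda>, h\<rangle> \<le> (1 - \<lambda>) (\<parallel>v\<parallel>\<^sup>2 - \<parallel>u\<^sup>\<lambda>\<parallel>\<^sup>2)\<close>, whose right-hand side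
  tends to zero. Nothing about the heat semigroup is used beyond \<open>h = heat w r \<tau> un\<close> being
  a fixed vector.\<close>

lemma uniform_limit_at_if_lipschitz_in_parameter:
  fixes f :: "'a::metric_space \<Rightarrow> 'b \<Rightarrow> 'c::metric_space"
  assumes "\<And>l x. x \<in> X \<Longrightarrow> dist (f l x) (f a x) \<le> C * dist l a"
  shows "uniform_limit X f (f a) (at a within T)"
proof (rule uniform_limitI)
  fix e :: real
  assume "0 < e"
  define d where "d = e / (\<bar>C\<bar> + 1)"
  have "0 < d" using \<open>0 < e\<close> by (simp add: d_def)
  have "dist (f l x) (f a x) < e" if "dist l a < d" "x \<in> X" for l x
  proof -
    have "dist (f l x) (f a x) \<le> \<bar>C\<bar> * dist l a"
      using assms[OF \<open>x \<in> X\<close>, of l] by (meson abs_ge_self order_trans mult_right_mono zero_le_dist)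
    also have "\<dots> \<le> \<bar>C\<bar> * d" using that by (simp add: mult_left_mono)
    also have "\<dots> < e" using \<open>0 < e\<close> by (simp add: d_def field_simps)
    finally show ?thesis .
  qed
  then show "\<forall>\<^sub>F l in at a within T. \<forall>x\<in>X. dist (f l x) (f a x) < e"
    using \<open>0 < d\<close> by (auto simp: eventually_at)
qed

lemma limit_of_penalised_minimisers_maximises:
  fixes U :: "real \<Rightarrow> 'b::topological_space"
  assumes "F \<noteq> bot" and "closed X" and "continuous_on X L"
    and "(U \<longlongrightarrow> u) F" and "((\<lambda>l. l) \<longlongrightarrow> 1) F"
    and q_bound: "\<And>x. x \<in> X \<Longrightarrow> \<bar>q x\<bar> \<le> C"
    and min: "\<forall>\<^sub>F l in F. U l \<in> X \<and> (\<forall>v\<in>X. (1 - l) * q (U l) - L (U l) \<le> (1 - l) * q v - L v)"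
  shows "u \<in> X \<and> (\<forall>v\<in>X. L v \<le> L u)"
proof
  have UX: "\<forall>\<^sub>F l in F. U l \<in> X" using min by (rule eventually_mono) simp
  show "u \<in> X" using Lim_in_closed_set[OF \<open>closed X\<close> UX \<open>F \<noteq> bot\<close> \<open>(U \<longlongrightarrow> u) F\<close>] .
  show "\<forall>v\<in>X. L v \<le> L u"
  proof
    fix v assume "v \<in> X"
    have "\<forall>\<^sub>F l in F. L v - L (U l) \<le> \<bar>1 - l\<bar> * (2 * C)"
      using min
    proof (rule eventually_mono)
      fix l assume l: "U l \<in> X \<and> (\<forall>v\<in>X. (1 - l) * q (U l) - L (U l) \<le> (1 - l) * q v - L v)"
      then have "L v - L (U l) \<le> (1 - l) * (q v - q (U l))"
        using \<open>v \<in> X\<close> by (auto simp: algebra_simps)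
      also have "\<dots> \<le> \<bar>1 - l\<bar> * \<bar>q v - q (U l)\<bar>" by (metis abs_ge_self abs_mult)
      also have "\<dots> \<le> \<bar>1 - l\<bar> * (2 * C)"
        using q_bound[OF \<open>v \<in> X\<close>] q_bound[of "U l"] l by (intro mult_left_mono) auto
      finally show "L v - L (U l) \<le> \<bar>1 - l\<bar> * (2 * C)" .
    qed
    moreover have "((\<lambda>l. L v - L (U l)) \<longlongrightarrow> L v - L u) F"
      using continuous_on_tendsto_compose[OF \<open>continuous_on X L\<close> \<open>(U \<longlongrightarrow> u) F\<close> \<open>u \<in> X\<close> UX]
      by (intro tendsto_intros)
    moreover have "((\<lambda>l. \<bar>1 - l\<bar> * (2 * C)) \<longlongrightarrow> \<bar>1 - 1\<bar> * (2 * C)) F"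
      using \<open>((\<lambda>l. l) \<longlongrightarrow> 1) F\<close> by (intro tendsto_intros)
    ultimately have "L v - L u \<le> 0"
      using tendsto_le[OF \<open>F \<noteq> bot\<close>] by fastforce
    then show "L v \<le> L u" by simp
  qed
qed

lemma continuous_on_innerV_left: "continuous_on A (\<lambda>u. innerV w r u h)"
  unfolding innerV_def
  by (intro continuous_intros continuous_on_subset[OF continuous_on_product_coordinates]) simp

lemma closed_V01: "closed V01"
  unfolding V01_def
  by (intro closed_Collect_all closed_Collect_conj closed_Collect_le continuous_intros
      continuous_on_product_coordinates)

lemma closed_V01_massV_level: "closed {u \<in> V01. massV w r u = c}"
proof -
  have "closed {u. massV w r u = c}"
    unfolding massV_def by (intro closed_Collect_eq continuous_on_innerV_left continuous_intros)
  then show ?thesis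
    unfolding Collect_conj_eq by (simp add: closed_Int closed_V01)
qed

lemma normV_square: "(normV w r u)\<^sup>2 = innerV w r u u"
  unfolding normV_def innerV_def by (simp add: sum_nonneg)

lemma innerV_self_nonneg: "0 \<le> innerV w r u u"
  unfolding innerV_def by (simp add: sum_nonneg)

lemma innerV_self_le_V01:
  assumes "u \<in> V01"
  shows "innerV w r u u \<le> (\<Sum>i\<in>UNIV. deg w i powr r)"
  unfolding innerV_def
proof (rule sum_mono)
  fix i
  have "u i * u i \<le> 1" using assms by (auto simp: V01_def mult_le_one)
  then show "u i * u i * deg w i powr r \<le> deg w i powr r"
    using mult_right_mono[of "u i * u i" 1 "deg w i powr r"] by simp
qed

theorem theorem30:
  fixes w :: "'a::finite \<Rightarrow> 'a \<Rightarrow> real" and r \<tau> :: real and un :: "'a \<Rightarrow> real"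
    and X :: "('a \<Rightarrow> real) set" and f :: "real \<Rightarrow> ('a \<Rightarrow> real) \<Rightarrow> real"
  assumes "weighted_graph w" and "graph_connected w"
    and "0 \<le> r" and "r \<le> 1"
    and "0 < \<tau>" and "un \<in> V01"
    and X_eq: "X = {u \<in> V01. massV w r u = massV w r un}"
    and f_eq: "\<And>l u. f l u = (1 - l) * (normV w r u)\<^sup>2 - 2 * innerV w r u (heat w r \<tau> un)"
  shows "uniform_limit X f (f 1) (at_left 1) \<and>
         (\<forall>(S :: real set) (U :: real \<Rightarrow> 'a \<Rightarrow> real) u.
           S \<subseteq> {..<1} \<and> 1 islimpt S
           \<and> (\<forall>l\<in>S. U l \<in> X \<and> (\<forall>v\<in>X. f l (U l) \<le> f l v))
           \<and> (U \<longlongrightarrow> u) (at 1 within S)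
         \<longrightarrow> u \<in> X \<and> (\<forall>v\<in>X. innerV w r v (heat w r \<tau> un) \<le> innerV w r u (heat w r \<tau> un)))"
proof -
  define C where "C = (\<Sum>i\<in>UNIV. deg w i powr r)"
  define L where "L u = 2 * innerV w r u (heat w r \<tau> un)" for u
  have f_split: "f l u = (1 - l) * innerV w r u u - L u" for l u
    by (simp add: f_eq L_def normV_square)
  have quad_bound: "\<bar>innerV w r u u\<bar> \<le> C" if "u \<in> X" for u
    using that innerV_self_le_V01[of u w r] innerV_self_nonneg[of w r u] by (simp add: X_eq C_def)
  have "uniform_limit X f (f 1) (at_left 1)"
  proof (rule uniform_limit_at_if_lipschitz_in_parameter)
    fix l u assume "u \<in> X"
    then have "\<bar>1 - l\<bar> * \<bar>innerV w r u u\<bar> \<le> \<bar>1 - l\<bar> * C"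
      using quad_bound by (simp add: mult_left_mono)
    then show "dist (f l u) (f 1 u) \<le> C * dist l 1"
      by (simp add: f_split dist_real_def abs_mult abs_minus_commute mult.commute)
  qed
  moreover have "u \<in> X \<and> (\<forall>v\<in>X. L v \<le> L u)"
    if "1 islimpt S" and minimal: "\<forall>l\<in>S. U l \<in> X \<and> (\<forall>v\<in>X. f l (U l) \<le> f l v)"
      and "(U \<longlongrightarrow> u) (at 1 within S)" for S U u
  proof (rule limit_of_penalised_minimisers_maximises[where q = "\<lambda>u. innerV w r u u"])
    show "at 1 within S \<noteq> bot" using \<open>1 islimpt S\<close> by (simp add: trivial_limit_within)
    show "closed X" unfolding X_eq by (rule closed_V01_massV_level)
    show "continuous_on X L"
      unfolding L_def by (intro continuous_intros continuous_on_innerV_left)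
    show "\<forall>\<^sub>F l in at 1 within S. U l \<in> X \<and>
        (\<forall>v\<in>X. (1 - l) * innerV w r (U l) (U l) - L (U l) \<le> (1 - l) * innerV w r v v - L v)"
      using minimal by (simp add: eventually_at_filter f_split)
  qed (use that quad_bound in auto)
  ultimately show ?thesis by (auto simp: L_def)
qed

end
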